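(* Let $(S,\mathcal B_S,\mu)$ be a standard Lebesgue space with $\sigma$-finite measure $\mu$, and $f,g:S\to[0,\infty)$ measurable with $\int_S f\,d\mu=\int_S g\,d\mu=1$. Let $(X,Y)$ satisfy \[ \mathbb P(X\le x,Y\le y)=\exp\Big\{-\int_S \max\Big(\frac{f(s)}{x},\frac{g(s)}{y}\Big)\mu(ds)\Big\},\qquad x,y>0, \] and let $(X_i,Y_i)$, $i\ge1$, be i.i.d. copies of $(X,Y)$. Let $E_t=\{s: f(s)>t g(s)\}$, $\|f\|_{E_t}=\int_{E_t} f\,d\mu$, $\gamma(t)=\|f\|_{E_t}/t$, and suppose $\mu(E_t)>0$ for all $t\in(0,\infty)$. Suppose $(X,Y)$ has ratio tail index $\alpha$, i.e. $\gamma\in RV_{-\alpha}$ (equivalently $X(u)/Y(u)\in RV_{-\alpha}$ for all $u\ge0$, where $X(u)=\max(X,u)$, $Y(u)=\max(Y,u)$). Then: (i) $\alpha=1$ if and only if $t\mapsto\|f\|_{E_t}$ is slowly varying; (ii) for all $u\ge0$ and all sequences $\kappa_n\sim(1/\gamma)^{\leftarrow}(Cn)$ with $C=1-\exp(-u^{-1})$, \[ \frac1{\kappa_n}\max_{1\le i\le n}\frac{X_i(u)}{Y_i(u)}\Rightarrow\zeta_\alpha, \] where $\zeta_\alpha$ is a standard $\alpha$-Fréchet random variable; (iii) for any sequence $u_n$ with $u_n=o(n)$, the convergence in (ii) holds with $u$ replaced by $u_n$ and with $\kappa_n\sim(1/\gamma)^{\leftarrow}(n/u_n)$.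
   Context: $RV_{-\rho}$: $U(tx)/U(t)\to x^{-\rho}$ for all $x>0$; slowly varying means $RV_0$. For nondecreasing $U$, $U^{\leftarrow}(y)=\inf\{s:U(s)\ge y\}$. A standard $\alpha$-Fréchet variable has $\mathbb P(\zeta_\alpha\le t)=\exp(-t^{-\alpha})$, $t>0$. $\Rightarrow$ denotes convergence in distribution; $a_n\sim b_n$ means $a_n/b_n\to1$; convention $1/0=\infty$, $\exp(-1/0)=0$.
   Formalization: In (iii) the sequence $u_n$ is also positive and tends to infinity, besides $u_n=o(n)$. Apart from conventions, each condition added here is assumed in the paper as well or is needed for the statement above to hold. *)

theory Defs
  imports "HOL-Probability.Probability" "HOL-Library.Landau_Symbols"
begin

definition regularly_varying :: "real \<Rightarrow> (real \<Rightarrow> real) \<Rightarrow> bool" where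
  "regularly_varying \<rho> U \<longleftrightarrow> (\<forall>x>0. ((\<lambda>t. U (t * x) / U t) \<longlongrightarrow> x powr \<rho>) at_top)"

definition slowly_varying :: "(real \<Rightarrow> real) \<Rightarrow> bool" where
  "slowly_varying U \<longleftrightarrow> regularly_varying 0 U"

definition gen_inv :: "(real \<Rightarrow> real) \<Rightarrow> real \<Rightarrow> real" where
  "gen_inv U y = Inf {s. 0 < s \<and> y \<le> U s}"

definition frechet_cdf :: "real \<Rightarrow> real \<Rightarrow> real" where
  "frechet_cdf \<alpha> t = (if 0 < t then exp (- (t powr (- \<alpha>))) else 0)"

definition Eset :: "'s measure \<Rightarrow> ('s \<Rightarrow> real) \<Rightarrow> ('s \<Rightarrow> real) \<Rightarrow> real \<Rightarrow> 's set" where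
  "Eset M f g t = {s \<in> space M. t * g s < f s}"

definition normE :: "'s measure \<Rightarrow> ('s \<Rightarrow> real) \<Rightarrow> ('s \<Rightarrow> real) \<Rightarrow> real \<Rightarrow> real" where
  "normE M f g t = set_lebesgue_integral M (Eset M f g t) f"

definition gam :: "'s measure \<Rightarrow> ('s \<Rightarrow> real) \<Rightarrow> ('s \<Rightarrow> real) \<Rightarrow> real \<Rightarrow> real" where
  "gam M f g t = normE M f g t / t"

text \<open>The constant C = 1 - exp(-1/u), with the convention 1/0 = infinity, exp(-infinity) = 0.\<close>
definition Cconst :: "real \<Rightarrow> real" where
  "Cconst u = (if u = 0 then 1 else 1 - exp (- (1 / u)))"

definition max_ratio :: "(nat \<Rightarrow> 'w \<Rightarrow> real) \<Rightarrow> (nat \<Rightarrow> 'w \<Rightarrow> real) \<Rightarrow> real \<Rightarrow> nat \<Rightarrow> 'w \<Rightarrow> real" where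
  "max_ratio X Y u n \<omega> = Max ((\<lambda>i. max (X i \<omega>) u / max (Y i \<omega>) u) ` {1..n})"

end

theory Submission
  imports Defs
begin

text \<open>Write \<open>P(X \<le> x, Y \<le> y) = exp (-V(x, y))\<close> with \<open>V(x, y) = \<integral> max (f/x) (g/y) d\<mu>\<close> and
  \<open>N(t) = \<parallel>f\<parallel>\<^sub>E\<^sub>t\<close>, so that \<open>\<gamma>(t) = N(t)/t\<close>; part (i) is then immediate.
  Cutting the event \<open>{X(u)/Y(u) > x}\<close> into geometric shells in the \<open>X\<close>-coordinate and squeezing each
  shell between two rectangles, whose probabilities are differences of \<open>exp (-V)\<close>, a telescoping
  series gives, for every \<open>a > 1\<close> and large \<open>x\<close>,
  \<open>C N(a x) / (a (x + 1)) \<le> P(X(u)/Y(u) > x) \<le> C a N(x/a) / x\<close> with \<open>C = 1 - exp(-1/u)\<close>.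
  As \<open>N\<close> is regularly varying with index \<open>1 - \<alpha>\<close>, the tail of the ratio is asymptotic to \<open>C \<gamma>(x)\<close>.
  By independence \<open>P(max \<le> \<kappa>\<^sub>n z) = \<Prod> (1 - p\<^sub>i)\<close>, and the choice of \<open>\<kappa>\<^sub>n\<close> through the
  generalised inverse of \<open>1/\<gamma>\<close> makes \<open>n p\<^sub>i \<rightarrow> z\<^sup>-\<^sup>\<alpha>\<close>, whence the Frechet limit.\<close>

lemma exp_neg_gap_lower:
  fixes p q a t :: real
  assumes "p \<le> q" "0 < q" "1 < a" "0 \<le> t"
  shows "(q - p) / ((a - 1) * q) * (exp (-q*t) - exp (-(a*q)*t)) \<le> exp (-p*t) - exp (-q*t)"
proof -
  have gap_pq: "(q - p) * t * exp (-q*t) \<le> exp (-p*t) - exp (-q*t)"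
  proof -
    have "exp (-q*t) * (1 + (q - p) * t) \<le> exp (-q*t) * exp ((q - p) * t)"
      using exp_ge_add_one_self[of "(q - p) * t"] by simp
    also have "exp (-q*t) * exp ((q - p) * t) = exp (-p*t)"
      by (simp add: exp_add[symmetric] algebra_simps)
    finally show ?thesis by (simp add: algebra_simps)
  qed
  have gap_q_aq: "exp (-q*t) - exp (-(a*q)*t) \<le> (a - 1) * q * t * exp (-q*t)"
  proof -
    have "1 - exp (-((a - 1) * q * t)) \<le> (a - 1) * q * t"
      using exp_ge_add_one_self[of "-((a - 1) * q * t)"] by linarith
    then have "exp (-q*t) * (1 - exp (-((a - 1) * q * t))) \<le> exp (-q*t) * ((a - 1) * q * t)"
      by (rule mult_left_mono) simp
    moreover have "exp (-q*t) * exp (-((a - 1) * q * t)) = exp (-(a*q)*t)"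
      by (simp add: exp_add[symmetric] algebra_simps)
    ultimately show ?thesis by (simp add: algebra_simps)
  qed
  have "(q - p) / ((a - 1) * q) * (exp (-q*t) - exp (-(a*q)*t))
      \<le> (q - p) / ((a - 1) * q) * ((a - 1) * q * t * exp (-q*t))"
    by (rule mult_left_mono[OF gap_q_aq]) (use assms in simp)
  also have "\<dots> = (q - p) * t * exp (-q*t)" using assms by simp
  finally show ?thesis using gap_pq by linarith
qed

lemma exp_neg_gap_upper:
  fixes p q a t :: real
  assumes "p \<le> q" "0 < p" "1 < a" "0 \<le> t"
  shows "exp (-p*t) - exp (-q*t) \<le> (q - p) / (p * (1 - 1/a)) * (exp (-(p/a)*t) - exp (-p*t))"
proof -
  have gap_pq: "exp (-p*t) - exp (-q*t) \<le> (q - p) * t * exp (-p*t)"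
  proof -
    have "1 - exp (-((q - p) * t)) \<le> (q - p) * t"
      using exp_ge_add_one_self[of "-((q - p) * t)"] by linarith
    then have "exp (-p*t) * (1 - exp (-((q - p) * t))) \<le> exp (-p*t) * ((q - p) * t)"
      by (rule mult_left_mono) simp
    moreover have "exp (-p*t) * exp (-((q - p) * t)) = exp (-q*t)"
      by (simp add: exp_add[symmetric] algebra_simps)
    ultimately show ?thesis by (simp add: algebra_simps)
  qed
  have gap_pa_p: "(p - p/a) * t * exp (-p*t) \<le> exp (-(p/a)*t) - exp (-p*t)"
  proof -
    have "exp (-p*t) * (1 + (p - p/a) * t) \<le> exp (-p*t) * exp ((p - p/a) * t)"
      using exp_ge_add_one_self[of "(p - p/a) * t"] by simp
    also have "exp (-p*t) * exp ((p - p/a) * t) = exp (-(p/a)*t)"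
      by (simp add: exp_add[symmetric] algebra_simps)
    finally show ?thesis by (simp add: algebra_simps)
  qed
  have "(q - p) * t * exp (-p*t) = (q - p) / (p * (1 - 1/a)) * ((p - p/a) * t * exp (-p*t))"
    using assms by (simp add: field_simps)
  also have "\<dots> \<le> (q - p) / (p * (1 - 1/a)) * (exp (-(p/a)*t) - exp (-p*t))"
    by (rule mult_left_mono[OF gap_pa_p]) (use assms in \<open>simp add: divide_nonneg_pos\<close>)
  finally show ?thesis using gap_pq by linarith
qed

lemma sums_exp_geometric_telescope:
  fixes a w c :: real
  assumes "1 < a" "0 < w"
  shows "(\<lambda>k. exp (-c/(w*a^Suc k)) - exp (-c/(w*a^k))) sums (1 - exp (-c/w))"
proof -
  have "(\<lambda>k. (c/w) * (1/a)^k) \<longlonglongrightarrow> (c/w) * 0"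
    using assms by (intro tendsto_mult tendsto_const LIMSEQ_power_zero) simp
  then have "(\<lambda>k. exp (-((c/w) * (1/a)^k))) \<longlonglongrightarrow> exp (-((c/w) * 0))"
    by (intro tendsto_exp tendsto_minus)
  moreover have "-((c/w) * (1/a)^k) = -c/(w*a^k)" for k
    by (simp add: power_one_over field_simps)
  ultimately have "(\<lambda>k. exp (-c/(w*a^k))) \<longlonglongrightarrow> 1" by simp
  from telescope_sums[OF this] show ?thesis by simp
qed

lemma power_bracket:
  fixes a r :: real
  assumes "1 < a" "1 < r"
  shows "\<exists>k. a^k < r \<and> r \<le> a^Suc k"
proof -
  obtain n where n: "r < a^n" using real_arch_pow[OF assms(1)] by blast
  define m where "m = (LEAST n. r \<le> a^n)"
  have m: "r \<le> a^m" unfolding m_def by (rule LeastI[of _ n]) (use n in auto)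
  with assms obtain k where k: "m = Suc k" by (cases m) auto
  have "\<not> r \<le> a^k" using not_less_Least[of k "\<lambda>n. r \<le> a^n"] k m_def by auto
  then show ?thesis using m k by (intro exI[of _ k]) simp
qed

lemma disjoint_family_geometric_shells:
  fixes a c :: real and Z :: "'w \<Rightarrow> real"
  assumes "1 \<le> a" "0 \<le> c"
  shows "disjoint_family (\<lambda>k. {\<omega> \<in> S. c*a^k < Z \<omega> \<and> Z \<omega> \<le> a * (c*a^k) \<and> Q k \<omega>})"
proof -
  have shell_below: "a * (c*a^m) \<le> c*a^n" if "m < n" for m n :: nat
  proof -
    have "a^Suc m \<le> a^n" using assms that by (intro power_increasing) auto
    then have "c * a^Suc m \<le> c * a^n" using assms(2) by (rule mult_left_mono)
    then show ?thesis by (simp add: algebra_simps)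
  qed
  show ?thesis
    unfolding disjoint_family_on_def
  proof (intro ballI impI)
    fix m n :: nat assume "m \<noteq> n"
    then consider "m < n" | "n < m" by linarith
    then show "{\<omega> \<in> S. c*a^m < Z \<omega> \<and> Z \<omega> \<le> a * (c*a^m) \<and> Q m \<omega>}
        \<inter> {\<omega> \<in> S. c*a^n < Z \<omega> \<and> Z \<omega> \<le> a * (c*a^n) \<and> Q n \<omega>} = {}"
      by cases (use shell_below in fastforce)+
  qed
qed

lemma tendsto_squeeze_family:
  fixes s :: "'a \<Rightarrow> real" and lo hi :: "real \<Rightarrow> 'a \<Rightarrow> real" and l h :: "real \<Rightarrow> real"
  assumes lo: "\<And>e. 0 < e \<Longrightarrow> e < 1 \<Longrightarrow> (lo e \<longlongrightarrow> l e) F"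
    and hi: "\<And>e. 0 < e \<Longrightarrow> e < 1 \<Longrightarrow> (hi e \<longlongrightarrow> h e) F"
    and between: "\<And>e. 0 < e \<Longrightarrow> e < 1 \<Longrightarrow> eventually (\<lambda>n. lo e n \<le> s n \<and> s n \<le> hi e n) F"
    and l: "(l \<longlongrightarrow> L) (at_right 0)" and h: "(h \<longlongrightarrow> L) (at_right 0)"
  shows "(s \<longlongrightarrow> L) F"
proof (rule tendstoI)
  fix d :: real assume "0 < d"
  then have d2: "0 < d/2" by simp
  have "eventually (\<lambda>e. e \<in> {0<..<1}) (at_right (0::real))"
    by (rule eventually_at_right_real) simp
  with tendstoD[OF l d2] tendstoD[OF h d2]
  have "eventually (\<lambda>e. dist (l e) L < d/2 \<and> dist (h e) L < d/2 \<and> e \<in> {0<..<1}) (at_right (0::real))"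
    by eventually_elim auto
  then obtain e where e: "dist (l e) L < d/2" "dist (h e) L < d/2" "0 < e" "e < 1"
    using eventually_happens[of _ "at_right (0::real)"] by (auto simp: trivial_limit_at_right_real)
  show "eventually (\<lambda>n. dist (s n) L < d) F"
    using tendstoD[OF lo[OF e(3,4)] d2] tendstoD[OF hi[OF e(3,4)] d2] between[OF e(3,4)]
    by eventually_elim (use e in \<open>auto simp: dist_real_def abs_if split: if_splits\<close>)
qed

lemma tendsto_one_minus_div_power:
  fixes t :: "nat \<Rightarrow> real"
  assumes t: "t \<longlonglongrightarrow> T"
  shows "(\<lambda>n. (1 - t n / real n)^n) \<longlonglongrightarrow> exp (-T)"
proof (rule tendsto_squeeze_family[where lo="\<lambda>e n. (1 - (T+e) / real n)^n"
      and hi="\<lambda>e n. (1 - (T-e) / real n)^n" and l="\<lambda>e. exp (-(T+e))" and h="\<lambda>e. exp (-(T-e))"])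
  have lim: "(\<lambda>n. (1 - c / real n)^n) \<longlonglongrightarrow> exp (-c)" for c :: real
    using tendsto_exp_limit_sequentially[of "-c"] by (simp only: diff_conv_add_uminus minus_divide_left)
  show "(\<lambda>n. (1 - (T+e) / real n)^n) \<longlonglongrightarrow> exp (-(T+e))"
    and "(\<lambda>n. (1 - (T-e) / real n)^n) \<longlonglongrightarrow> exp (-(T-e))" for e
    by (rule lim)+
  fix e :: real assume e: "0 < e"
  show "eventually (\<lambda>n. (1 - (T+e) / real n)^n \<le> (1 - t n / real n)^n
      \<and> (1 - t n / real n)^n \<le> (1 - (T-e) / real n)^n) sequentially"
    using tendstoD[OF t e] eventually_ge_at_top[of "nat \<lceil>T + e\<rceil> + 1"]
  proof eventually_elim
    case (elim n)
    then have n: "0 < real n" "T + e \<le> real n" by linarith+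
    have "T - e \<le> t n" "t n \<le> T + e" using elim(1) by (auto simp: dist_real_def)
    then have "(T - e) / real n \<le> t n / real n" "t n / real n \<le> (T + e) / real n"
      using n by (simp_all add: divide_right_mono)
    moreover have "0 \<le> 1 - (T + e) / real n" using n by simp
    ultimately show ?case by (simp add: power_mono)
  qed
next
  show "((\<lambda>e. exp (-(T+e))) \<longlongrightarrow> exp (-T)) (at_right 0)"
    and "((\<lambda>e. exp (-(T-e))) \<longlongrightarrow> exp (-T)) (at_right 0)"
    by (rule tendsto_eq_intros refl | simp)+
qed

lemma prod_one_minus_bounds:
  fixes p :: "'a \<Rightarrow> real"
  assumes "\<forall>i\<in>I. lo \<le> p i \<and> p i \<le> hi" "hi \<le> 1"
  shows "(1 - hi)^card I \<le> (\<Prod>i\<in>I. 1 - p i)" "(\<Prod>i\<in>I. 1 - p i) \<le> (1 - lo)^card I"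
proof -
  have "p i \<le> 1" if "i \<in> I" for i using assms that by fastforce
  then show "(1 - hi)^card I \<le> (\<Prod>i\<in>I. 1 - p i)" "(\<Prod>i\<in>I. 1 - p i) \<le> (1 - lo)^card I"
    using prod_mono[of I "\<lambda>_. 1 - hi" "\<lambda>i. 1 - p i"] prod_mono[of I "\<lambda>i. 1 - p i" "\<lambda>_. 1 - lo"] assms
    by auto
qed

lemma tendsto_exp_neg_div_at_right_0:
  fixes c :: real
  assumes "0 < c"
  shows "((\<lambda>w. exp (-(c/w))) \<longlongrightarrow> 0) (at_right 0)"
proof -
  have "filterlim (\<lambda>w. c * inverse w) at_top (at_right (0::real))"
    by (rule filterlim_tendsto_pos_mult_at_top[OF tendsto_const assms filterlim_inverse_at_top_right])
  then have "filterlim (\<lambda>w. -(c / w)) at_bot (at_right (0::real))"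
    by (simp add: filterlim_uminus_at_bot divide_inverse)
  then show ?thesis by (rule filterlim_compose[OF exp_at_bot])
qed

lemma filterlim_at_top_asymp_equiv:
  fixes \<kappa> y :: "'a \<Rightarrow> real"
  assumes "\<kappa> \<sim>[F] y" and y: "filterlim y at_top F"
  shows "filterlim \<kappa> at_top F"
proof -
  have ypos: "eventually (\<lambda>n. 0 < y n) F" using y by (simp add: filterlim_at_top_dense)
  have "((\<lambda>n. \<kappa> n / y n) \<longlongrightarrow> 1) F"
    by (rule asymp_equivD_strong[OF assms(1)]) (use ypos in \<open>auto elim: eventually_mono\<close>)
  then have "filterlim (\<lambda>n. \<kappa> n / y n * y n) at_top F"
    by (rule filterlim_tendsto_pos_mult_at_top[OF _ _ y]) simp
  moreover have "eventually (\<lambda>n. \<kappa> n / y n * y n = \<kappa> n) F" using ypos by eventually_elim auto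
  ultimately show ?thesis by (simp add: filterlim_cong)
qed

lemma tendsto_div_add_1_at_top:
  fixes x :: "'a \<Rightarrow> real"
  assumes x: "filterlim x at_top F"
  shows "((\<lambda>n. x n / (x n + 1)) \<longlongrightarrow> 1) F"
proof -
  have "((\<lambda>n. 1 / (1 + inverse (x n))) \<longlongrightarrow> 1 / (1 + 0)) F"
    by (intro tendsto_intros tendsto_inverse_0_at_top x) simp
  moreover have "eventually (\<lambda>n. 0 < x n) F" using x by (simp add: filterlim_at_top_dense)
  then have "eventually (\<lambda>n. 1 / (1 + inverse (x n)) = x n / (x n + 1)) F"
    by eventually_elim (simp add: field_simps)
  ultimately show ?thesis by (simp add: tendsto_cong)
qed

lemma filterlim_div_at_top_smallo:
  fixes u :: "nat \<Rightarrow> real"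
  assumes pos: "\<forall>n. 0 < u n" and o: "u \<in> o(\<lambda>n. real n)"
  shows "filterlim (\<lambda>n. real n / u n) at_top sequentially"
proof -
  have "(\<lambda>n. u n / real n) \<longlonglongrightarrow> 0" using smalloD_tendsto[OF o] .
  moreover have "eventually (\<lambda>n. 0 < u n / real n) sequentially"
    using eventually_gt_at_top[of 0] by eventually_elim (use pos in auto)
  ultimately have "filterlim (\<lambda>n. inverse (u n / real n)) at_top sequentially"
    by (rule filterlim_inverse_at_top)
  then show ?thesis by simp
qed

section \<open>Truncated ratios\<close>

definition truncation_factor :: "real \<Rightarrow> real \<Rightarrow> real" where
  "truncation_factor u c = (if u = 0 then 1 else 1 - exp (- (c / u)))"

lemma truncation_factor_mono: "0 \<le> u \<Longrightarrow> c \<le> c' \<Longrightarrow> truncation_factor u c \<le> truncation_factor u c'"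
  by (auto simp: truncation_factor_def divide_right_mono)

lemma truncation_factor_nonneg: "0 \<le> u \<Longrightarrow> 0 \<le> c \<Longrightarrow> 0 \<le> truncation_factor u c"
  by (auto simp: truncation_factor_def)

lemma truncation_factor_le_1: "0 \<le> u \<Longrightarrow> truncation_factor u c \<le> 1"
  by (simp add: truncation_factor_def)

lemma Cconst_eq_truncation_factor: "Cconst u = truncation_factor u 1"
  by (simp add: Cconst_def truncation_factor_def)

lemma Cconst_pos: "0 \<le> u \<Longrightarrow> 0 < Cconst u"
  by (auto simp: Cconst_def)

lemma truncation_factor_tendsto_1:
  assumes "0 < c"
  shows "((\<lambda>w. truncation_factor w c) \<longlongrightarrow> 1) (at_right 0)"
proof -
  have "((\<lambda>w. 1 - exp (-(c/w))) \<longlongrightarrow> 1 - 0) (at_right 0)"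
    by (intro tendsto_intros tendsto_exp_neg_div_at_right_0 assms)
  moreover have "eventually (\<lambda>w. 1 - exp (-(c/w)) = truncation_factor w c) (at_right (0::real))"
    by (simp add: eventually_at_right_less truncation_factor_def eventually_mono[OF eventually_at_right_less])
  ultimately show ?thesis by (simp add: tendsto_cong)
qed

lemma tendsto_mult_Cconst_at_top:
  assumes u: "filterlim u at_top F"
  shows "((\<lambda>n. u n * Cconst (u n)) \<longlongrightarrow> 1) F"
proof (rule tendsto_sandwich[where f="\<lambda>n. u n / (u n + 1)" and h="\<lambda>n. 1"])
  have upos: "eventually (\<lambda>n. 0 < u n) F" using u by (simp add: filterlim_at_top_dense)
  then show "eventually (\<lambda>n. u n / (u n + 1) \<le> u n * Cconst (u n)) F"
  proof eventually_elim
    case (elim n)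
    have "1 + 1 / u n \<le> exp (1 / u n)" by (rule exp_ge_add_one_self)
    then have "exp (- (1 / u n)) \<le> u n / (u n + 1)"
      using elim by (simp add: exp_minus field_simps)
    then have "u n * (1 - u n / (u n + 1)) \<le> u n * (1 - exp (- (1 / u n)))"
      using elim by (intro mult_left_mono) auto
    moreover have "u n / (u n + 1) = u n * (1 - u n / (u n + 1))"
      using elim by (simp add: field_simps)
    ultimately show ?case using elim by (simp add: Cconst_def)
  qed
  show "eventually (\<lambda>n. u n * Cconst (u n) \<le> 1) F"
    using upos
  proof eventually_elim
    case (elim n)
    have "1 - 1 / u n \<le> exp (- (1 / u n))" using exp_ge_add_one_self[of "- (1 / u n)"] by simp
    then show ?case using elim by (simp add: Cconst_def field_simps)
  qed
qed (rule tendsto_div_add_1_at_top[OF u] tendsto_const)+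

definition ratio_exceeds :: "'w measure \<Rightarrow> ('w \<Rightarrow> real) \<Rightarrow> ('w \<Rightarrow> real) \<Rightarrow> real \<Rightarrow> real \<Rightarrow> 'w set" where
  "ratio_exceeds P X Y u x = {\<omega> \<in> space P. x < max (X \<omega>) u / max (Y \<omega>) u}"

lemma ratio_exceeds_iff:
  assumes "0 < u" "1 < x"
  shows "\<omega> \<in> ratio_exceeds P X Y u x \<longleftrightarrow> \<omega> \<in> space P \<and> x * u < X \<omega> \<and> x * Y \<omega> < X \<omega>"
proof -
  have "x * max (Y \<omega>) u = max (x * Y \<omega>) (x * u)" "u < x * u"
    using assms by (simp_all add: max_def)
  then have "x * max (Y \<omega>) u < max (X \<omega>) u \<longleftrightarrow> x * u < X \<omega> \<and> x * Y \<omega> < X \<omega>"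
    by (auto simp: max_def split: if_splits)
  moreover have "0 < max (Y \<omega>) u" using assms by simp
  ultimately show ?thesis by (simp add: ratio_exceeds_def less_divide_eq mult.commute)
qed

lemma ratio_exceeds_0_iff:
  assumes "0 \<le> x"
  shows "\<omega> \<in> ratio_exceeds P X Y 0 x \<longleftrightarrow> \<omega> \<in> space P \<and> 0 < Y \<omega> \<and> x * Y \<omega> < X \<omega>"
proof -
  have "x < max (X \<omega>) 0 / max (Y \<omega>) 0 \<longleftrightarrow> 0 < Y \<omega> \<and> x * Y \<omega> < X \<omega>"
  proof (cases "0 < Y \<omega>")
    case True
    then have "0 \<le> x * Y \<omega>" using assms by simp
    then show ?thesis using True by (auto simp: less_divide_eq max_def mult.commute)
  qed (use assms in \<open>simp add: max_def\<close>)
  then show ?thesis by (simp add: ratio_exceeds_def)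
qed

lemma ratio_exceeds_subset_0:
  "0 < w \<Longrightarrow> 1 < x \<Longrightarrow> ratio_exceeds P X Y w x \<subseteq> ratio_exceeds P X Y 0 x \<union> {\<omega> \<in> space P. Y \<omega> \<le> 0}"
  by (auto simp: ratio_exceeds_iff ratio_exceeds_0_iff)

lemma ratio_exceeds_0_subset:
  "0 < w \<Longrightarrow> 1 < x \<Longrightarrow> ratio_exceeds P X Y 0 x \<subseteq> ratio_exceeds P X Y w x \<union> {\<omega> \<in> space P. X \<omega> \<le> x * w}"
  by (auto simp: ratio_exceeds_iff ratio_exceeds_0_iff)

section \<open>The spectral functions\<close>

locale spectral =
  fixes M :: "'s measure" and f g :: "'s \<Rightarrow> real"
  assumes f_measurable[measurable]: "f \<in> borel_measurable M"
    and g_measurable[measurable]: "g \<in> borel_measurable M"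
    and f_nonneg: "\<forall>s\<in>space M. 0 \<le> f s" and g_nonneg: "\<forall>s\<in>space M. 0 \<le> g s"
    and f_integrable: "integrable M f" and g_integrable: "integrable M g"
    and f_integral: "integral\<^sup>L M f = 1" and g_integral: "integral\<^sup>L M g = 1"
begin

abbreviation "N \<equiv> normE M f g"

lemma Eset_sets[measurable]: "Eset M f g t \<in> sets M"
  unfolding Eset_def by measurable

lemma normE_eq_integral: "N t = (\<integral>s. indicator (Eset M f g t) s * f s \<partial>M)"
  unfolding normE_def set_lebesgue_integral_def by simp

lemma integrable_indicator_Eset: "integrable M (\<lambda>s. indicator (Eset M f g t) s * f s)"
  using integrable_mult_indicator[OF Eset_sets f_integrable] by simp

lemma AE_indicator_Eset_nonneg: "AE s in M. 0 \<le> indicator (Eset M f g t) s * f s"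
  using f_nonneg by (auto simp: indicator_def)

lemma normE_nonneg: "0 \<le> N t"
  unfolding normE_eq_integral by (rule integral_nonneg_AE[OF AE_indicator_Eset_nonneg])

lemma normE_le_1: "N t \<le> 1"
proof -
  have "N t \<le> integral\<^sup>L M f" unfolding normE_eq_integral
    by (rule integral_mono[OF integrable_indicator_Eset f_integrable])
      (use f_nonneg in \<open>auto simp: indicator_def\<close>)
  then show ?thesis using f_integral by simp
qed

lemma normE_antimono:
  assumes "0 \<le> t" "t \<le> t'"
  shows "N t' \<le> N t"
  unfolding normE_eq_integral
proof (rule integral_mono[OF integrable_indicator_Eset integrable_indicator_Eset])
  fix s assume s: "s \<in> space M"
  have "s \<in> Eset M f g t' \<Longrightarrow> s \<in> Eset M f g t"
    using s assms g_nonneg mult_right_mono[of t t' "g s"] by (auto simp: Eset_def)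
  then show "indicator (Eset M f g t') s * f s \<le> indicator (Eset M f g t) s * f s"
    using f_nonneg s by (auto simp: indicator_def)
qed

lemma integrable_max_scaled: "integrable M (\<lambda>s. max (c * f s) (d * g s))"
  using f_integrable g_integrable by auto

text \<open>In terms of the exponent function \<open>V(x, y) = \<integral> max (f/x) (g/y) d\<mu>\<close> of the paper,
  \<open>W x b = V(b, 1/x)\<close>; the reciprocal second argument keeps the integrand linear in \<open>x\<close>.\<close>
definition W :: "real \<Rightarrow> real \<Rightarrow> real" where
  "W x b = (\<integral>s. max (f s / b) (x * g s) \<partial>M)"

lemma integrable_W_integrand: "integrable M (\<lambda>s. max (f s / b) (x * g s))"
  using integrable_max_scaled[of "1/b" x] by simp

lemma exponent_ge_reciprocal: "1/x \<le> (\<integral>s. max (f s / x) (g s / y) \<partial>M)"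
proof -
  have "(\<integral>s. f s / x \<partial>M) \<le> (\<integral>s. max (f s / x) (g s / y) \<partial>M)"
    using integrable_max_scaled[of "1/x" "1/y"] f_integrable by (intro integral_mono) auto
  then show ?thesis using f_integral by simp
qed

lemma exponent_rescale:
  assumes "0 < v" "0 < b" "0 < x"
  shows "(\<integral>s. max (f s / (b * v)) (g s / (v / x)) \<partial>M) = W x b / v"
proof -
  have "max (f s / (b * v)) (g s / (v / x)) = max (f s / b) (x * g s) / v" for s
    using assms by (simp add: max_def field_simps divide_le_eq le_divide_eq)
  then show ?thesis unfolding W_def by simp
qed

lemma W_bounds:
  assumes "0 \<le> x"
  shows "x \<le> W x 1" "W x 1 \<le> x + 1"
proof -
  have "integral\<^sup>L M (\<lambda>s. x * g s) \<le> W x 1" unfolding W_def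
    by (rule integral_mono[OF _ integrable_W_integrand]) (use g_integrable in auto)
  then show "x \<le> W x 1" using g_integral by simp
  have "W x 1 \<le> integral\<^sup>L M (\<lambda>s. f s + x * g s)" unfolding W_def
    by (rule integral_mono[OF integrable_W_integrand])
      (use f_integrable g_integrable f_nonneg g_nonneg assms in auto)
  then show "W x 1 \<le> x + 1" using f_integral g_integral f_integrable g_integrable by simp
qed

lemma W_mono:
  assumes "1 \<le> a"
  shows "W x 1 \<le> W x (1/a)"
  unfolding W_def
proof (rule integral_mono[OF integrable_W_integrand integrable_W_integrand])
  fix s assume "s \<in> space M"
  then have "0 \<le> f s" using f_nonneg by auto
  then have "f s \<le> f s * a" using assms by (simp add: mult_le_cancel_left1)
  then show "max (f s / 1) (x * g s) \<le> max (f s / (1/a)) (x * g s)" by auto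
qed

text \<open>Rescaling the \<open>f\<close>-coordinate by \<open>a\<close> changes the integrand only on \<open>E\<^sub>a\<^sub>x\<close>
  (resp. \<open>E\<^sub>x\<^sub>/\<^sub>a\<close>), where it is \<open>f\<close> up to a factor.\<close>
lemma W_gap_lower:
  assumes "0 < x" "1 < a"
  shows "(1 - 1/a) * N (a * x) \<le> W x 1 - W x a"
proof -
  have "(1 - 1/a) * N (a * x) = (\<integral>s. (1 - 1/a) * (indicator (Eset M f g (a*x)) s * f s) \<partial>M)"
    unfolding normE_eq_integral by simp
  also have "\<dots> \<le> (\<integral>s. max (f s / 1) (x * g s) - max (f s / a) (x * g s) \<partial>M)"
  proof (rule integral_mono)
    show "integrable M (\<lambda>s. (1 - 1/a) * (indicator (Eset M f g (a*x)) s * f s))"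
      using integrable_indicator_Eset by auto
    show "integrable M (\<lambda>s. max (f s / 1) (x * g s) - max (f s / a) (x * g s))"
      by (intro Bochner_Integration.integrable_diff integrable_W_integrand)
    fix s assume s: "s \<in> space M"
    have "0 \<le> f s" using f_nonneg s by auto
    then have fa: "f s / a \<le> f s" using assms by (simp add: divide_le_eq mult_le_cancel_left1)
    show "(1 - 1/a) * (indicator (Eset M f g (a*x)) s * f s)
        \<le> max (f s / 1) (x * g s) - max (f s / a) (x * g s)"
    proof (cases "s \<in> Eset M f g (a*x)")
      case True
      then have "x * g s < f s / a" using assms by (simp add: Eset_def field_simps)
      then show ?thesis using True fa by (simp add: algebra_simps max_def)
    qed (use fa in \<open>simp add: max_def\<close>)
  qed
  also have "\<dots> = W x 1 - W x a"
    unfolding W_def by (rule Bochner_Integration.integral_diff[OF integrable_W_integrand integrable_W_integrand])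
  finally show ?thesis .
qed

lemma W_gap_upper:
  assumes "0 < x" "1 < a"
  shows "W x (1/a) - W x 1 \<le> (a - 1) * N (x / a)"
proof -
  have "W x (1/a) - W x 1 = (\<integral>s. max (f s / (1/a)) (x * g s) - max (f s / 1) (x * g s) \<partial>M)"
    unfolding W_def
    by (rule Bochner_Integration.integral_diff[symmetric, OF integrable_W_integrand integrable_W_integrand])
  also have "\<dots> \<le> (\<integral>s. (a - 1) * (indicator (Eset M f g (x/a)) s * f s) \<partial>M)"
  proof (rule integral_mono)
    show "integrable M (\<lambda>s. (a - 1) * (indicator (Eset M f g (x/a)) s * f s))"
      using integrable_indicator_Eset by auto
    show "integrable M (\<lambda>s. max (f s / (1/a)) (x * g s) - max (f s / 1) (x * g s))"
      by (intro Bochner_Integration.integrable_diff integrable_W_integrand)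
    fix s assume s: "s \<in> space M"
    show "max (f s / (1/a)) (x * g s) - max (f s / 1) (x * g s)
        \<le> (a - 1) * (indicator (Eset M f g (x/a)) s * f s)"
    proof (cases "s \<in> Eset M f g (x/a)")
      case True
      then have "x * g s < a * f s" using assms by (simp add: Eset_def field_simps)
      then show ?thesis using True f_nonneg s assms by (simp add: algebra_simps max_def)
    next
      case False
      then have "a * f s \<le> x * g s" using assms s by (simp add: Eset_def field_simps)
      then show ?thesis using False by (simp add: max_def mult.commute)
    qed
  qed
  also have "\<dots> = (a - 1) * N (x / a)" unfolding normE_eq_integral by simp
  finally show ?thesis .
qed

end

section \<open>Tail of a single truncated ratio\<close>

locale spectral_pair = spectral +
  fixes P :: "'w measure" and X0 Y0 :: "'w \<Rightarrow> real"
  assumes prob_space_P: "prob_space P"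
    and X0_measurable[measurable]: "X0 \<in> borel_measurable P"
    and Y0_measurable[measurable]: "Y0 \<in> borel_measurable P"
    and joint_cdf: "\<forall>x y. 0 < x \<longrightarrow> 0 < y \<longrightarrow>
           measure P {\<omega> \<in> space P. X0 \<omega> \<le> x \<and> Y0 \<omega> \<le> y}
             = exp (- integral\<^sup>L M (\<lambda>s. max (f s / x) (g s / y)))"
begin

sublocale P: prob_space P by (rule prob_space_P)

lemma spectral_pair_swap: "spectral_pair M g f P Y0 X0"
proof -
  have "measure P {\<omega> \<in> space P. Y0 \<omega> \<le> x \<and> X0 \<omega> \<le> y}
      = exp (- integral\<^sup>L M (\<lambda>s. max (g s / x) (f s / y)))" if "0 < x" "0 < y" for x y
  proof -
    have "{\<omega> \<in> space P. Y0 \<omega> \<le> x \<and> X0 \<omega> \<le> y} = {\<omega> \<in> space P. X0 \<omega> \<le> y \<and> Y0 \<omega> \<le> x}"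
      by blast
    then show ?thesis using joint_cdf that by (simp add: max.commute)
  qed
  then show ?thesis
    using f_nonneg g_nonneg f_integrable g_integrable f_integral g_integral prob_space_P
    by unfold_locales auto
qed

lemma ratio_exceeds_sets[measurable]: "ratio_exceeds P X0 Y0 u x \<in> sets P"
  unfolding ratio_exceeds_def by measurable

lemma prob_shell:
  assumes "0 < v" "0 < b" "b \<le> b'" "0 < x"
  shows "measure P {\<omega> \<in> space P. b * v < X0 \<omega> \<and> X0 \<omega> \<le> b' * v \<and> Y0 \<omega> \<le> v/x}
    = exp (- (W x b' / v)) - exp (- (W x b / v))"
proof -
  have cdf: "measure P {\<omega> \<in> space P. X0 \<omega> \<le> c * v \<and> Y0 \<omega> \<le> v/x} = exp (- (W x c / v))" if "0 < c" for c
    using joint_cdf exponent_rescale[OF assms(1) that assms(4)] assms that by simp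
  have "{\<omega> \<in> space P. b * v < X0 \<omega> \<and> X0 \<omega> \<le> b' * v \<and> Y0 \<omega> \<le> v/x}
      = {\<omega> \<in> space P. X0 \<omega> \<le> b' * v \<and> Y0 \<omega> \<le> v/x} - {\<omega> \<in> space P. X0 \<omega> \<le> b * v \<and> Y0 \<omega> \<le> v/x}"
    by auto
  moreover have "{\<omega> \<in> space P. X0 \<omega> \<le> b * v \<and> Y0 \<omega> \<le> v/x} \<subseteq> {\<omega> \<in> space P. X0 \<omega> \<le> b' * v \<and> Y0 \<omega> \<le> v/x}"
  proof -
    have "b * v \<le> b' * v" using assms by (simp add: mult_right_mono)
    then show ?thesis by auto
  qed
  ultimately show ?thesis
    using cdf[of b] cdf[of b'] assms by (simp add: P.finite_measure_Diff)
qed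

lemma prob_X0_le:
  assumes c: "0 < c"
  shows "measure P {\<omega> \<in> space P. X0 \<omega> \<le> c} \<le> exp (- (1/c))"
proof -
  define A where "A n = {\<omega> \<in> space P. X0 \<omega> \<le> c \<and> Y0 \<omega> \<le> real (Suc n)}" for n
  have "(\<lambda>n. measure P (A n)) \<longlonglongrightarrow> measure P (\<Union>n. A n)"
    by (rule P.finite_Lim_measure_incseq) (auto simp: A_def incseq_def)
  moreover have "(\<Union>n. A n) = {\<omega> \<in> space P. X0 \<omega> \<le> c}"
  proof (intro equalityI subsetI)
    fix \<omega> assume \<omega>: "\<omega> \<in> {\<omega> \<in> space P. X0 \<omega> \<le> c}"
    have "Y0 \<omega> \<le> real (Suc (nat \<lceil>Y0 \<omega>\<rceil>))" using real_nat_ceiling_ge[of "Y0 \<omega>"] by linarith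
    then show "\<omega> \<in> (\<Union>n. A n)" using \<omega> by (auto simp: A_def)
  qed (auto simp: A_def)
  moreover have "measure P (A n) \<le> exp (- (1/c))" for n
    using joint_cdf exponent_ge_reciprocal[of c "real (Suc n)"] c by (simp add: A_def)
  ultimately show ?thesis by (metis LIMSEQ_le_const2)
qed

lemma prob_X0_nonpos: "measure P {\<omega> \<in> space P. X0 \<omega> \<le> 0} = 0"
proof -
  have lim: "((\<lambda>c. exp (- (1/c))) \<longlongrightarrow> 0) (at_right (0::real))"
    by (rule tendsto_exp_neg_div_at_right_0) simp
  have "eventually (\<lambda>c. measure P {\<omega> \<in> space P. X0 \<omega> \<le> 0} \<le> exp (- (1/c))) (at_right (0::real))"
    using eventually_at_right_less
  proof eventually_elim
    case (elim c)
    have "measure P {\<omega> \<in> space P. X0 \<omega> \<le> 0} \<le> measure P {\<omega> \<in> space P. X0 \<omega> \<le> c}"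
      using elim by (intro P.finite_measure_mono) auto
    then show ?case using prob_X0_le[OF elim] by linarith
  qed
  then have "measure P {\<omega> \<in> space P. X0 \<omega> \<le> 0} \<le> 0"
    by (rule tendsto_le[OF trivial_limit_at_right_real lim tendsto_const])
  then show ?thesis by (simp add: order_antisym)
qed

lemma prob_Y0_nonpos: "measure P {\<omega> \<in> space P. Y0 \<omega> \<le> 0} = 0"
  by (rule spectral_pair.prob_X0_nonpos[OF spectral_pair_swap])

text \<open>Decompose \<open>{X(u)/Y(u) > x}\<close> into the shells \<open>x u a\<^sup>k < X \<le> x u a\<^sup>k\<^sup>+\<^sup>1\<close>; on each shell the
  condition on \<open>Y\<close> is squeezed between two rectangles, whose probabilities are differences of
  the joint distribution function and telescope after comparison by \<open>exp_neg_gap_lower/upper\<close>.\<close>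
lemma ratio_tail_lower:
  assumes u: "0 < u" and x: "1 < x" and a: "1 < a"
  shows "N (a*x) / (a * W x 1) * truncation_factor u (a * W x 1 / x)
    \<le> measure P (ratio_exceeds P X0 Y0 u x)"
proof -
  define q where "q = W x 1"
  define p where "p = W x a"
  define v where "v k = x*u*a^k" for k :: nat
  define S where "S k = {\<omega> \<in> space P. v k < X0 \<omega> \<and> X0 \<omega> \<le> a * v k \<and> Y0 \<omega> \<le> v k / x}" for k
  define K where "K = (q - p) / ((a - 1) * q)"
  define h where "h k = exp (-(a*q)/((x*u)*a^k))" for k :: nat
  have vpos: "0 < v k" for k using u x a unfolding v_def by simp
  have q: "x \<le> q" using W_bounds[of x] x unfolding q_def by auto
  have gap: "(1 - 1/a) * N (a * x) \<le> q - p" using W_gap_lower[of x a] x a unfolding q_def p_def by auto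
  moreover have "0 \<le> (1 - 1/a) * N (a * x)" using a normE_nonneg by simp
  ultimately have pq: "p \<le> q" by linarith
  have S_sets: "range S \<subseteq> sets P" unfolding S_def by auto
  have disj: "disjoint_family S" unfolding S_def v_def
    using disjoint_family_geometric_shells[of a "x*u" "space P" X0 "\<lambda>k \<omega>. Y0 \<omega> \<le> x*u*a^k / x"] a u x
    by (simp add: mult.assoc)
  have step: "K * (h (Suc k) - h k) \<le> measure P (S k)" for k
  proof -
    have "measure P (S k) = exp (- (p / v k)) - exp (- (q / v k))"
      using prob_shell[of "v k" 1 a x] vpos[of k] a x unfolding S_def p_def q_def by simp
    moreover have "K * (exp (-q*(1/v k)) - exp (-(a*q)*(1/v k))) \<le> exp (-p*(1/v k)) - exp (-q*(1/v k))"
      unfolding K_def by (rule exp_neg_gap_lower) (use pq q x a vpos[of k] in auto)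
    moreover have "h (Suc k) = exp (-q*(1/v k))" "h k = exp (-(a*q)*(1/v k))"
      unfolding h_def v_def using a x u by (simp_all add: field_simps)
    ultimately show ?thesis by simp
  qed
  have tsum: "(\<lambda>k. K * (h (Suc k) - h k)) sums (K * (1 - exp (-(a*q)/(x*u))))"
    unfolding h_def by (intro sums_mult sums_exp_geometric_telescope) (use a x u in auto)
  have "K * (1 - exp (-(a*q)/(x*u))) \<le> measure P (\<Union>k. S k)"
    by (rule sums_le[OF step tsum P.finite_measure_UNION[OF S_sets disj]])
  also have "\<dots> \<le> measure P (ratio_exceeds P X0 Y0 u x)"
  proof (rule P.finite_measure_mono[OF _ ratio_exceeds_sets], rule subsetI)
    fix \<omega> assume "\<omega> \<in> (\<Union>k. S k)"
    then obtain k where k: "\<omega> \<in> space P" "v k < X0 \<omega>" "Y0 \<omega> \<le> v k / x" unfolding S_def by auto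
    have "x*u \<le> v k" unfolding v_def using a x u by simp
    moreover have "x * Y0 \<omega> \<le> v k" using k(3) x by (simp add: field_simps)
    ultimately show "\<omega> \<in> ratio_exceeds P X0 Y0 u x" using k by (simp add: ratio_exceeds_iff[OF u x])
  qed
  finally have main: "K * (1 - exp (-(a*q)/(x*u))) \<le> measure P (ratio_exceeds P X0 Y0 u x)" .
  have "N (a*x) / (a*q) = ((1 - 1/a) * N (a*x)) / ((a - 1) * q)" using a q x by (simp add: field_simps)
  also have "\<dots> \<le> K" unfolding K_def using gap a q x by (intro divide_right_mono) auto
  finally have "N (a*x) / (a*q) * (1 - exp (-(a*q)/(x*u))) \<le> K * (1 - exp (-(a*q)/(x*u)))"
    by (rule mult_right_mono) (use a q x u in simp)
  then show ?thesis using main u by (simp add: truncation_factor_def q_def)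
qed

lemma ratio_tail_upper:
  assumes u: "0 < u" and x: "1 < x" and a: "1 < a"
  shows "measure P (ratio_exceeds P X0 Y0 u x)
    \<le> a * N (x/a) / W x 1 * truncation_factor u (W x 1 / (a * x))"
proof -
  define q where "q = W x 1"
  define q' where "q' = W x (1/a)"
  define v where "v k = x*u*a^k" for k :: nat
  define S where "S k = {\<omega> \<in> space P. v k < X0 \<omega> \<and> X0 \<omega> \<le> a * v k \<and> Y0 \<omega> \<le> a * v k / x}" for k
  define K where "K = (q' - q) / (q * (1 - 1/a))"
  define h where "h k = exp (-(q/a)/((x*u)*a^k))" for k :: nat
  have vpos: "0 < v k" for k using u x a unfolding v_def by simp
  have q: "x \<le> q" using W_bounds[of x] x unfolding q_def by auto
  have gap: "q' - q \<le> (a - 1) * N (x / a)" using W_gap_upper[of x a] x a unfolding q_def q'_def by auto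
  have qq': "q \<le> q'" using W_mono[of a x] a unfolding q_def q'_def by simp
  have S_sets: "range S \<subseteq> sets P" unfolding S_def by auto
  have disj: "disjoint_family S" unfolding S_def v_def
    using disjoint_family_geometric_shells[of a "x*u" "space P" X0 "\<lambda>k \<omega>. Y0 \<omega> \<le> a * (x*u*a^k) / x"] a u x
    by (simp add: mult.assoc)
  have step: "measure P (S k) \<le> K * (h (Suc k) - h k)" for k
  proof -
    have "measure P (S k) = exp (- (q / (a * v k))) - exp (- (q' / (a * v k)))"
      using prob_shell[of "a * v k" "1/a" 1 x] vpos[of k] a x unfolding S_def q_def q'_def by simp
    moreover have "exp (-q*(1/(a * v k))) - exp (-q'*(1/(a * v k)))
        \<le> K * (exp (-(q/a)*(1/(a * v k))) - exp (-q*(1/(a * v k))))"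
      unfolding K_def by (rule exp_neg_gap_upper) (use qq' q x a vpos[of k] in auto)
    moreover have "h (Suc k) = exp (-(q/a)*(1/(a * v k)))" "h k = exp (-q*(1/(a * v k)))"
      unfolding h_def v_def using a x u by (simp_all add: field_simps)
    ultimately show ?thesis by simp
  qed
  have tsum: "(\<lambda>k. K * (h (Suc k) - h k)) sums (K * (1 - exp (-(q/a)/(x*u))))"
    unfolding h_def by (intro sums_mult sums_exp_geometric_telescope) (use a x u in auto)
  have "measure P (ratio_exceeds P X0 Y0 u x) \<le> measure P (\<Union>k. S k)"
  proof (rule P.finite_measure_mono, rule subsetI)
    fix \<omega> assume "\<omega> \<in> ratio_exceeds P X0 Y0 u x"
    then have \<omega>: "\<omega> \<in> space P" "x * u < X0 \<omega>" "x * Y0 \<omega> < X0 \<omega>"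
      by (simp_all add: ratio_exceeds_iff[OF u x])
    obtain k where k: "a^k < X0 \<omega> / (x*u)" "X0 \<omega> / (x*u) \<le> a^Suc k"
      using power_bracket[of a "X0 \<omega> / (x*u)"] a \<omega>(2) x u by auto
    have "v k < X0 \<omega>" "X0 \<omega> \<le> a * v k" using k x u unfolding v_def by (simp_all add: field_simps)
    moreover from this(2) have "Y0 \<omega> \<le> a * v k / x" using \<omega>(3) x by (simp add: field_simps)
    ultimately show "\<omega> \<in> (\<Union>k. S k)" using \<omega>(1) unfolding S_def by auto
  qed (use S_sets in auto)
  also have "\<dots> \<le> K * (1 - exp (-(q/a)/(x*u)))"
    by (rule sums_le[OF step P.finite_measure_UNION[OF S_sets disj] tsum])
  also have "\<dots> \<le> a * N (x/a) / q * (1 - exp (-(q/a)/(x*u)))"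
  proof (rule mult_right_mono)
    have "K \<le> ((a - 1) * N (x / a)) / (q * (1 - 1/a))" unfolding K_def using gap a q x
      by (intro divide_right_mono) auto
    also have "\<dots> = a * N (x/a) / q" using a q x by (simp add: field_simps)
    finally show "K \<le> a * N (x/a) / q" .
  qed (use a q x u in simp)
  finally show ?thesis using u by (simp add: truncation_factor_def q_def mult.assoc)
qed

text \<open>For \<open>u = 0\<close> the shells degenerate; instead let \<open>u \<down> 0\<close>, using that \<open>X, Y > 0\<close> almost surely.\<close>
lemma ratio_tail_lower_0:
  assumes x: "1 < x" and a: "1 < a"
  shows "N (a*x) / (a * W x 1) \<le> measure P (ratio_exceeds P X0 Y0 0 x)"
proof -
  define c where "c = a * W x 1 / x"
  have "0 < c" using W_bounds[of x] x a by (simp add: c_def)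
  then have lim: "((\<lambda>w. N (a*x) / (a * W x 1) * truncation_factor w c) \<longlongrightarrow> N (a*x) / (a * W x 1) * 1)
      (at_right 0)"
    by (intro tendsto_intros truncation_factor_tendsto_1)
  have "eventually (\<lambda>w. N (a*x) / (a * W x 1) * truncation_factor w c
      \<le> measure P (ratio_exceeds P X0 Y0 0 x)) (at_right 0)"
    using eventually_at_right_less
  proof eventually_elim
    case (elim w)
    have "N (a*x) / (a * W x 1) * truncation_factor w c \<le> measure P (ratio_exceeds P X0 Y0 w x)"
      unfolding c_def by (rule ratio_tail_lower[OF elim x a])
    also have "\<dots> \<le> measure P (ratio_exceeds P X0 Y0 0 x \<union> {\<omega> \<in> space P. Y0 \<omega> \<le> 0})"
      by (rule P.finite_measure_mono[OF ratio_exceeds_subset_0[OF elim x]]) auto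
    also have "\<dots> \<le> measure P (ratio_exceeds P X0 Y0 0 x) + measure P {\<omega> \<in> space P. Y0 \<omega> \<le> 0}"
      by (rule measure_subadditive) (auto simp: P.emeasure_eq_measure)
    finally show ?case using prob_Y0_nonpos by simp
  qed
  from tendsto_le[OF trivial_limit_at_right_real tendsto_const lim this] show ?thesis by simp
qed

lemma ratio_tail_upper_0:
  assumes x: "1 < x" and a: "1 < a"
  shows "measure P (ratio_exceeds P X0 Y0 0 x) \<le> a * N (x/a) / W x 1"
proof -
  have lim: "((\<lambda>w. a * N (x/a) / W x 1 + exp (- ((1/x) / w))) \<longlongrightarrow> a * N (x/a) / W x 1 + 0) (at_right 0)"
    using x by (intro tendsto_intros tendsto_exp_neg_div_at_right_0) simp
  have "eventually (\<lambda>w. measure P (ratio_exceeds P X0 Y0 0 x)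
      \<le> a * N (x/a) / W x 1 + exp (- ((1/x) / w))) (at_right 0)"
    using eventually_at_right_less
  proof eventually_elim
    case (elim w)
    have "measure P (ratio_exceeds P X0 Y0 0 x)
        \<le> measure P (ratio_exceeds P X0 Y0 w x \<union> {\<omega> \<in> space P. X0 \<omega> \<le> x * w})"
      by (rule P.finite_measure_mono[OF ratio_exceeds_0_subset[OF elim x]]) auto
    also have "\<dots> \<le> measure P (ratio_exceeds P X0 Y0 w x) + measure P {\<omega> \<in> space P. X0 \<omega> \<le> x * w}"
      by (rule measure_subadditive) (auto simp: P.emeasure_eq_measure)
    also have "measure P (ratio_exceeds P X0 Y0 w x) \<le> a * N (x/a) / W x 1"
    proof -
      have "0 \<le> a * N (x/a) / W x 1" using normE_nonneg W_bounds[of x] a x by simp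
      then show ?thesis
        using ratio_tail_upper[OF elim x a] truncation_factor_le_1[of w] elim
        by (meson less_imp_le mult_left_le order_trans)
    qed
    also have "measure P {\<omega> \<in> space P. X0 \<omega> \<le> x * w} \<le> exp (- ((1/x) / w))"
      using prob_X0_le[of "x * w"] elim x by simp
    finally show ?case by simp
  qed
  from tendsto_le[OF trivial_limit_at_right_real lim tendsto_const this] show ?thesis by simp
qed

lemma ratio_tail_bounds_Cconst:
  assumes u: "0 \<le> u" and x: "1 < x" and a: "1 < a" and xa: "1/(a - 1) \<le> x"
  shows "Cconst u * N (x*a) / (a*(x + 1)) \<le> measure P (ratio_exceeds P X0 Y0 u x)"
    and "measure P (ratio_exceeds P X0 Y0 u x) \<le> Cconst u * a * N (x/a) / x"
proof -
  have W: "x \<le> W x 1" "W x 1 \<le> x + 1" using W_bounds[of x] x by auto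
  have lower: "N (a*x) / (a * W x 1) * truncation_factor u (a * W x 1 / x) \<le> measure P (ratio_exceeds P X0 Y0 u x)"
    using ratio_tail_lower[OF _ x a] ratio_tail_lower_0[OF x a] u
    by (cases "u = 0") (auto simp: truncation_factor_def)
  have upper: "measure P (ratio_exceeds P X0 Y0 u x) \<le> a * N (x/a) / W x 1 * truncation_factor u (W x 1 / (a * x))"
    using ratio_tail_upper[OF _ x a] ratio_tail_upper_0[OF x a] u
    by (cases "u = 0") (auto simp: truncation_factor_def)
  have "Cconst u * N (x*a) / (a*(x + 1)) = N (a*x) / (a * (x + 1)) * truncation_factor u 1"
    by (simp add: Cconst_eq_truncation_factor ac_simps)
  also have "\<dots> \<le> N (a*x) / (a * W x 1) * truncation_factor u (a * W x 1 / x)"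
  proof (rule mult_mono)
    show "N (a*x) / (a * (x + 1)) \<le> N (a*x) / (a * W x 1)"
      using W a x normE_nonneg by (intro divide_left_mono) auto
    have "x \<le> a * W x 1" using W a x by (smt (verit) mult_le_cancel_right1)
    then show "truncation_factor u 1 \<le> truncation_factor u (a * W x 1 / x)"
      using x by (intro truncation_factor_mono[OF u]) simp
  qed (use normE_nonneg truncation_factor_nonneg[OF u] W a x in auto)
  finally show "Cconst u * N (x*a) / (a*(x + 1)) \<le> measure P (ratio_exceeds P X0 Y0 u x)"
    using lower by linarith
  have "a * N (x/a) / W x 1 * truncation_factor u (W x 1 / (a * x)) \<le> a * N (x/a) / x * truncation_factor u 1"
  proof (rule mult_mono)
    show "a * N (x/a) / W x 1 \<le> a * N (x/a) / x"
      using W a x normE_nonneg by (intro divide_left_mono) auto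
    have "W x 1 \<le> a * x" using W xa a by (simp add: field_simps)
    then show "truncation_factor u (W x 1 / (a * x)) \<le> truncation_factor u 1"
      using a x by (intro truncation_factor_mono[OF u]) simp
  qed (use normE_nonneg truncation_factor_nonneg[OF u] W a x in auto)
  with upper have "measure P (ratio_exceeds P X0 Y0 u x) \<le> a * N (x/a) / x * truncation_factor u 1"
    by linarith
  then show "measure P (ratio_exceeds P X0 Y0 u x) \<le> Cconst u * a * N (x/a) / x"
    by (simp add: Cconst_eq_truncation_factor ac_simps)
qed

end

section \<open>Regular variation and the normalising sequence\<close>

locale spectral_regvar = spectral +
  fixes \<alpha> :: real
  assumes Eset_emeasure_pos: "\<forall>t>0. 0 < emeasure M (Eset M f g t)"
    and gam_regularly_varying: "regularly_varying (- \<alpha>) (gam M f g)"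
begin

abbreviation "\<gamma> \<equiv> gam M f g"

lemma normE_pos:
  assumes "0 < t"
  shows "0 < N t"
proof -
  have "N t \<noteq> 0"
  proof
    assume "N t = 0"
    then have "AE s in M. indicator (Eset M f g t) s * f s = 0"
      using integral_nonneg_eq_0_iff_AE[OF integrable_indicator_Eset AE_indicator_Eset_nonneg]
      unfolding normE_eq_integral by simp
    then have "AE s in M. s \<notin> Eset M f g t"
    proof (rule AE_mp[OF _ AE_I2], intro impI)
      fix s assume "s \<in> space M" "indicator (Eset M f g t) s * f s = 0"
      moreover have "0 \<le> t * g s" using g_nonneg \<open>s \<in> space M\<close> assms by simp
      ultimately show "s \<notin> Eset M f g t" by (auto simp: Eset_def)
    qed
    then have "emeasure M (Eset M f g t) = 0"
      using AE_iff_measurable[OF Eset_sets, of "\<lambda>s. s \<notin> Eset M f g t"] by (auto simp: Eset_def)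
    with Eset_emeasure_pos assms show False by auto
  qed
  then show ?thesis using normE_nonneg[of t] by simp
qed

lemma gam_eq: "\<gamma> t = N t / t"
  unfolding gam_def by simp

lemma normE_regularly_varying: "regularly_varying (1 - \<alpha>) N"
  unfolding regularly_varying_def
proof (intro allI impI)
  fix y :: real assume y: "0 < y"
  have "((\<lambda>t. \<gamma> (t*y) / \<gamma> t) \<longlongrightarrow> y powr (-\<alpha>)) at_top"
    using gam_regularly_varying y unfolding regularly_varying_def by auto
  then have "((\<lambda>t. y * (\<gamma> (t*y) / \<gamma> t)) \<longlongrightarrow> y * y powr (-\<alpha>)) at_top"
    by (rule tendsto_mult_left)
  moreover have "y * y powr (-\<alpha>) = y powr (1 - \<alpha>)"
    using y by (simp add: powr_add[of y 1 "-\<alpha>", simplified])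
  moreover have "eventually (\<lambda>t. y * (\<gamma> (t*y) / \<gamma> t) = N (t*y) / N t) at_top"
    using eventually_gt_at_top[of 0]
    by eventually_elim (use y normE_pos in \<open>simp add: gam_eq field_simps\<close>)
  ultimately show "((\<lambda>t. N (t*y) / N t) \<longlongrightarrow> y powr (1 - \<alpha>)) at_top"
    by (simp add: tendsto_cong)
qed

lemma alpha_eq_1_iff_slowly_varying: "\<alpha> = 1 \<longleftrightarrow> slowly_varying N"
proof
  assume "\<alpha> = 1"
  then show "slowly_varying N" using normE_regularly_varying by (simp add: slowly_varying_def)
next
  assume "slowly_varying N"
  then have slow: "((\<lambda>t. N (t*2) / N t) \<longlongrightarrow> (2::real) powr 0) at_top"
    unfolding slowly_varying_def regularly_varying_def by auto
  have regular: "((\<lambda>t. N (t*2) / N t) \<longlongrightarrow> (2::real) powr (1 - \<alpha>)) at_top"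
    using normE_regularly_varying unfolding regularly_varying_def by simp
  have "(2::real) powr (1 - \<alpha>) = 2 powr 0"
    by (rule tendsto_unique[OF _ regular slow]) simp
  then show "\<alpha> = 1" by simp
qed

lemma tendsto_normE_ratio:
  assumes y: "filterlim y at_top F" and z: "0 < z"
  shows "((\<lambda>n. N (y n * z) / N (y n)) \<longlongrightarrow> z powr (1 - \<alpha>)) F"
  using filterlim_compose[OF normE_regularly_varying[unfolded regularly_varying_def, rule_format, OF z] y]
  by (simp add: o_def)

definition U :: "real \<Rightarrow> real" where
  "U t = 1 / \<gamma> t"

lemma U_eq: "0 < t \<Longrightarrow> U t = t / N t"
  unfolding U_def gam_eq by simp

lemma U_mono:
  assumes "0 < s" "s \<le> s'"
  shows "U s \<le> U s'"
proof -
  have "N s' \<le> N s" "0 < N s'" using normE_antimono normE_pos assms by simp_all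
  then show ?thesis using assms U_eq[of s] U_eq[of s'] by (simp add: frac_le)
qed

lemma U_ge: "0 < t \<Longrightarrow> t \<le> U t"
  using U_eq[of t] normE_le_1[of t] normE_pos[of t] by (simp add: le_divide_eq mult_left_le)

lemma
  shows le_U_if_gen_inv_less: "gen_inv U c < s \<Longrightarrow> c \<le> U s"
    and U_less_if_less_gen_inv: "0 < s \<Longrightarrow> s < gen_inv U c \<Longrightarrow> U s < c"
proof -
  define S where "S = {s. 0 < s \<and> c \<le> U s}"
  have gi: "gen_inv U c = Inf S" unfolding gen_inv_def S_def by simp
  have "max c 1 \<in> S" unfolding S_def using U_ge[of "max c 1"] by auto
  then have ne: "S \<noteq> {}" by auto
  have bdd: "bdd_below S" unfolding S_def by (auto intro: bdd_belowI[of _ 0])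
  show "c \<le> U s" if less: "gen_inv U c < s"
  proof -
    obtain s0 where "s0 \<in> S" "s0 < s" using less cInf_less_iff[OF ne bdd, of s] unfolding gi by auto
    then show ?thesis using U_mono[of s0 s] unfolding S_def by auto
  qed
  show "U s < c" if "0 < s" "s < gen_inv U c"
  proof (rule ccontr)
    assume "\<not> U s < c"
    then have "s \<in> S" using that unfolding S_def by auto
    then have "gen_inv U c \<le> s" unfolding gi by (rule cInf_lower[OF _ bdd])
    then show False using that by simp
  qed
qed

lemma filterlim_gen_inv_U_at_top:
  assumes c: "filterlim c at_top F"
  shows "filterlim (\<lambda>n. gen_inv U (c n)) at_top F"
  unfolding filterlim_at_top
proof
  fix Z :: real
  have "eventually (\<lambda>n. U (max Z 1) < c n) F" using c by (simp add: filterlim_at_top_dense)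
  then show "eventually (\<lambda>n. Z \<le> gen_inv U (c n)) F"
  proof eventually_elim
    case (elim n)
    show ?case
    proof (rule ccontr)
      assume "\<not> Z \<le> gen_inv U (c n)"
      then have "c n \<le> U (max Z 1)" by (intro le_U_if_gen_inv_less) auto
      then show False using elim by simp
    qed
  qed
qed

lemma tendsto_U_ratio:
  assumes y: "filterlim y at_top F" and z: "0 < z"
  shows "((\<lambda>n. U (y n * z) / U (y n)) \<longlongrightarrow> z powr \<alpha>) F"
proof -
  have "((\<lambda>n. z / (N (y n * z) / N (y n))) \<longlongrightarrow> z / z powr (1 - \<alpha>)) F"
    using z by (intro tendsto_intros tendsto_normE_ratio[OF y z]) auto
  moreover have "z / z powr (1 - \<alpha>) = z powr \<alpha>" using z by (simp add: powr_diff)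
  moreover have "eventually (\<lambda>n. z / (N (y n * z) / N (y n)) = U (y n * z) / U (y n)) F"
    using filterlim_at_top_dense[THEN iffD1, OF y, rule_format, of 0]
  proof eventually_elim
    case (elim n)
    then have "0 < y n * z" using z by simp
    then show ?case using U_eq[OF elim] U_eq z normE_pos[OF elim] normE_pos elim by (simp add: field_simps)
  qed
  ultimately show ?thesis by (simp add: tendsto_cong)
qed

lemma tendsto_mult_gam_gen_inv:
  assumes c: "filterlim c at_top F"
  shows "((\<lambda>n. c n * \<gamma> (gen_inv U (c n))) \<longlongrightarrow> 1) F"
proof -
  define y where "y n = gen_inv U (c n)" for n
  have y: "filterlim y at_top F" unfolding y_def by (rule filterlim_gen_inv_U_at_top[OF c])
  have ypos: "eventually (\<lambda>n. 0 < y n) F" using y by (simp add: filterlim_at_top_dense)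
  show ?thesis unfolding y_def[symmetric]
  proof (rule tendsto_squeeze_family[where lo="\<lambda>e n. U (y n * (1 - e)) / U (y n)"
        and hi="\<lambda>e n. U (y n * (1 + e)) / U (y n)" and l="\<lambda>e. (1 - e) powr \<alpha>" and h="\<lambda>e. (1 + e) powr \<alpha>"])
    fix e :: real assume e: "0 < e" "e < 1"
    show "((\<lambda>n. U (y n * (1 - e)) / U (y n)) \<longlongrightarrow> (1 - e) powr \<alpha>) F"
      and "((\<lambda>n. U (y n * (1 + e)) / U (y n)) \<longlongrightarrow> (1 + e) powr \<alpha>) F"
      using e by (auto intro: tendsto_U_ratio[OF y])
    show "eventually (\<lambda>n. U (y n * (1 - e)) / U (y n) \<le> c n * \<gamma> (y n)
        \<and> c n * \<gamma> (y n) \<le> U (y n * (1 + e)) / U (y n)) F"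
      using ypos
    proof eventually_elim
      case (elim n)
      have "0 < U (y n)" using U_eq[OF elim] normE_pos[OF elim] elim by simp
      moreover have "c n * \<gamma> (y n) = c n / U (y n)" unfolding U_def by simp
      moreover have "U (y n * (1 - e)) < c n"
        by (rule U_less_if_less_gen_inv) (use e elim in \<open>auto simp: y_def\<close>)
      moreover have "c n \<le> U (y n * (1 + e))"
        by (rule le_U_if_gen_inv_less) (use e elim in \<open>auto simp: y_def\<close>)
      ultimately show ?case by (auto intro: divide_right_mono)
    qed
  next
    show "((\<lambda>e. (1 - e) powr \<alpha>) \<longlongrightarrow> 1) (at_right 0)" "((\<lambda>e. (1 + e) powr \<alpha>) \<longlongrightarrow> 1) (at_right 0)"
      by (rule tendsto_eq_intros refl | simp)+
  qed
qed

text \<open>The uniform convergence needed here comes for free from the monotonicity of \<open>N\<close>.\<close>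
lemma tendsto_normE_ratio_asymp:
  assumes y: "filterlim y at_top F" and \<kappa>: "\<kappa> \<sim>[F] y" and z: "0 < z"
  shows "((\<lambda>n. N (\<kappa> n * z) / N (y n)) \<longlongrightarrow> z powr (1 - \<alpha>)) F"
proof (rule tendsto_squeeze_family[where lo="\<lambda>e n. N (y n * (z * (1 + e))) / N (y n)"
      and hi="\<lambda>e n. N (y n * (z * (1 - e))) / N (y n)"
      and l="\<lambda>e. (z * (1 + e)) powr (1 - \<alpha>)" and h="\<lambda>e. (z * (1 - e)) powr (1 - \<alpha>)"])
  have ypos: "eventually (\<lambda>n. 0 < y n) F" using y by (simp add: filterlim_at_top_dense)
  have r: "((\<lambda>n. \<kappa> n / y n) \<longlongrightarrow> 1) F"
    by (rule asymp_equivD_strong[OF \<kappa>]) (use ypos in \<open>auto elim: eventually_mono\<close>)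
  fix e :: real assume e: "0 < e" "e < 1"
  show "((\<lambda>n. N (y n * (z * (1 + e))) / N (y n)) \<longlongrightarrow> (z * (1 + e)) powr (1 - \<alpha>)) F"
    and "((\<lambda>n. N (y n * (z * (1 - e))) / N (y n)) \<longlongrightarrow> (z * (1 - e)) powr (1 - \<alpha>)) F"
    using e z by (auto intro: tendsto_normE_ratio[OF y])
  show "eventually (\<lambda>n. N (y n * (z * (1 + e))) / N (y n) \<le> N (\<kappa> n * z) / N (y n)
      \<and> N (\<kappa> n * z) / N (y n) \<le> N (y n * (z * (1 - e))) / N (y n)) F"
    using tendstoD[OF r e(1)] ypos
  proof eventually_elim
    case (elim n)
    then have "\<kappa> n / y n < 1 + e" "1 - e < \<kappa> n / y n" by (auto simp: dist_real_def)
    then have \<kappa>y: "\<kappa> n \<le> y n * (1 + e)" "y n * (1 - e) \<le> \<kappa> n" using elim by (auto simp: field_simps)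
    moreover have "0 < y n * (1 - e)" using elim e by simp
    ultimately have "0 \<le> \<kappa> n * z" using z by simp
    have "N (y n * (z * (1 + e))) \<le> N (\<kappa> n * z)"
      by (rule normE_antimono) (use \<open>0 \<le> \<kappa> n * z\<close> z \<kappa>y in \<open>auto simp: mult_right_mono\<close>)
    moreover have "N (\<kappa> n * z) \<le> N (y n * (z * (1 - e)))"
      by (rule normE_antimono) (use elim z e \<kappa>y in \<open>auto simp: mult_right_mono\<close>)
    ultimately show ?case using normE_pos[OF elim(2)] by (auto intro: divide_right_mono)
  qed
next
  have "((\<lambda>e. (z * (1 + s * e)) powr (1 - \<alpha>)) \<longlongrightarrow> (z * (1 + s * 0)) powr (1 - \<alpha>)) (at_right 0)"
    for s :: real
    using z by (intro tendsto_powr tendsto_intros) auto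
  from this[of 1] this[of "-1"]
  show "((\<lambda>e. (z * (1 + e)) powr (1 - \<alpha>)) \<longlongrightarrow> z powr (1 - \<alpha>)) (at_right 0)"
    and "((\<lambda>e. (z * (1 - e)) powr (1 - \<alpha>)) \<longlongrightarrow> z powr (1 - \<alpha>)) (at_right 0)"
    by simp_all
qed

lemma tendsto_mult_gam_asymp_gen_inv:
  assumes c: "filterlim c at_top F" and \<kappa>: "\<kappa> \<sim>[F] (\<lambda>n. gen_inv U (c n))" and z: "0 < z"
  shows "((\<lambda>n. c n * \<gamma> (\<kappa> n * z)) \<longlongrightarrow> z powr (-\<alpha>)) F"
proof -
  define y where "y n = gen_inv U (c n)" for n
  have y: "filterlim y at_top F" unfolding y_def by (rule filterlim_gen_inv_U_at_top[OF c])
  have ypos: "eventually (\<lambda>n. 0 < y n) F" using y by (simp add: filterlim_at_top_dense)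
  have r: "((\<lambda>n. \<kappa> n / y n) \<longlongrightarrow> 1) F"
    by (rule asymp_equivD_strong[OF \<kappa>[folded y_def]]) (use ypos in \<open>auto elim: eventually_mono\<close>)
  have "filterlim \<kappa> at_top F" by (rule filterlim_at_top_asymp_equiv[OF \<kappa>[folded y_def] y])
  then have \<kappa>pos: "eventually (\<lambda>n. 0 < \<kappa> n) F" by (simp add: filterlim_at_top_dense)
  have "((\<lambda>n. (c n * \<gamma> (y n)) * (N (\<kappa> n * z) / N (y n)) * inverse ((\<kappa> n / y n) * z))
      \<longlongrightarrow> 1 * z powr (1 - \<alpha>) * inverse (1 * z)) F"
    using z by (intro tendsto_intros tendsto_mult_gam_gen_inv[OF c, folded y_def]
        tendsto_normE_ratio_asymp[OF y \<kappa>[folded y_def]] r) auto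
  moreover have "1 * z powr (1 - \<alpha>) * inverse (1 * z) = z powr (-\<alpha>)"
    using z by (simp add: powr_diff powr_minus divide_inverse)
  moreover have "eventually (\<lambda>n. (c n * \<gamma> (y n)) * (N (\<kappa> n * z) / N (y n)) * inverse ((\<kappa> n / y n) * z)
      = c n * \<gamma> (\<kappa> n * z)) F"
    using ypos \<kappa>pos
  proof eventually_elim
    case (elim n)
    then show ?case using z normE_pos[OF elim(1)] by (simp add: gam_eq field_simps)
  qed
  ultimately show ?thesis by (simp add: tendsto_cong)
qed

end

section \<open>Maxima of independent truncated ratios\<close>

locale spectral_sample = spectral_regvar M f g \<alpha> for M :: "'s measure" and f g \<alpha> +
  fixes P :: "'w measure" and X Y :: "nat \<Rightarrow> 'w \<Rightarrow> real"
  assumes prob_space_P: "prob_space P"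
    and XY_measurable: "\<forall>i. X i \<in> borel_measurable P \<and> Y i \<in> borel_measurable P"
    and indep: "prob_space.indep_vars P (\<lambda>_. borel) (\<lambda>i \<omega>. (X i \<omega>, Y i \<omega>)) UNIV"
    and joint_cdfs: "\<forall>i x y. 0 < x \<longrightarrow> 0 < y \<longrightarrow>
           measure P {\<omega> \<in> space P. X i \<omega> \<le> x \<and> Y i \<omega> \<le> y}
             = exp (- integral\<^sup>L M (\<lambda>s. max (f s / x) (g s / y)))"
begin

sublocale P: prob_space P by (rule prob_space_P)

lemma X_measurable[measurable]: "X i \<in> borel_measurable P"
  and Y_measurable[measurable]: "Y i \<in> borel_measurable P"
  using XY_measurable by auto

lemma spectral_pair_sample: "spectral_pair M f g P (X i) (Y i)"
  using spectral_axioms prob_space_P XY_measurable joint_cdfs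
  by (simp add: spectral_pair_def spectral_pair_axioms_def)

lemma prob_max_ratio_le:
  assumes n: "1 \<le> n" and k: "0 < k"
  shows "measure P {\<omega> \<in> space P. max_ratio X Y u n \<omega> / k \<le> z}
    = (\<Prod>i\<in>{1..n}. 1 - measure P (ratio_exceeds P (X i) (Y i) u (z * k)))"
proof -
  define A where "A = {p \<in> space (borel :: (real \<times> real) measure). max (fst p) u / max (snd p) u \<le> z * k}"
  have "(\<lambda>p::real \<times> real. max (fst p) u / max (snd p) u) \<in> borel_measurable borel"
    by (intro borel_measurable_divide borel_measurable_max borel_measurable_continuous_onI
        continuous_intros measurable_const)
  then have A: "A \<in> sets borel" unfolding A_def by measurable
  have preimage: "(\<lambda>\<omega>. (X i \<omega>, Y i \<omega>)) -` A \<inter> space P = space P - ratio_exceeds P (X i) (Y i) u (z * k)"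
    for i by (auto simp: A_def ratio_exceeds_def)
  have "{\<omega> \<in> space P. max_ratio X Y u n \<omega> / k \<le> z}
      = (\<Inter>i\<in>{1..n}. (\<lambda>\<omega>. (X i \<omega>, Y i \<omega>)) -` A \<inter> space P)"
    using n k by (auto simp: A_def max_ratio_def divide_le_eq)
  also have "measure P \<dots> = (\<Prod>i\<in>{1..n}. measure P ((\<lambda>\<omega>. (X i \<omega>, Y i \<omega>)) -` A \<inter> space P))"
    using P.indep_varsD[OF indep, of "{1..n}" "\<lambda>_. A"] n A by simp
  finally show ?thesis
    unfolding preimage
    using spectral_pair.ratio_exceeds_sets[OF spectral_pair_sample] by (simp add: P.prob_compl)
qed

lemma prob_max_ratio_bounds:
  assumes n: "1 \<le> n" and k: "0 < k" and u: "0 \<le> u" and x: "1 < k * z"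
    and e: "0 < e" "1/e \<le> k * z" and hi: "Cconst u * (1 + e) * N (k * z / (1 + e)) / (k * z) \<le> 1"
  shows "(1 - Cconst u * (1 + e) * N (k * z / (1 + e)) / (k * z))^n
      \<le> measure P {\<omega> \<in> space P. max_ratio X Y u n \<omega> / k \<le> z}"
    and "measure P {\<omega> \<in> space P. max_ratio X Y u n \<omega> / k \<le> z}
      \<le> (1 - Cconst u * N (k * z * (1 + e)) / ((1 + e) * (k * z + 1)))^n"
proof -
  have "1/((1 + e) - 1) \<le> k * z" "1 < 1 + e" using e by simp_all
  note tail = spectral_pair.ratio_tail_bounds_Cconst[OF spectral_pair_sample u x this(2) this(1)]
  have "\<forall>i\<in>{1..n}. Cconst u * N (k * z * (1 + e)) / ((1 + e) * (k * z + 1))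
      \<le> measure P (ratio_exceeds P (X i) (Y i) u (z * k))
    \<and> measure P (ratio_exceeds P (X i) (Y i) u (z * k)) \<le> Cconst u * (1 + e) * N (k * z / (1 + e)) / (k * z)"
    using tail by (simp add: mult.commute mult.left_commute)
  from prod_one_minus_bounds[OF this hi]
  show "(1 - Cconst u * (1 + e) * N (k * z / (1 + e)) / (k * z))^n
      \<le> measure P {\<omega> \<in> space P. max_ratio X Y u n \<omega> / k \<le> z}"
    and "measure P {\<omega> \<in> space P. max_ratio X Y u n \<omega> / k \<le> z}
      \<le> (1 - Cconst u * N (k * z * (1 + e)) / ((1 + e) * (k * z + 1)))^n"
    unfolding prob_max_ratio_le[OF n k] by simp_all
qed

lemma max_ratio_tendsto_frechet:
  assumes u: "\<And>n. 0 \<le> u n" and \<kappa>: "filterlim \<kappa> at_top sequentially" and z: "0 < z"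
    and lim: "(\<lambda>n. real n * Cconst (u n) * \<gamma> (\<kappa> n * z)) \<longlonglongrightarrow> z powr (-\<alpha>)"
  shows "(\<lambda>n. measure P {\<omega> \<in> space P. max_ratio X Y (u n) n \<omega> / \<kappa> n \<le> z})
    \<longlonglongrightarrow> exp (- (z powr (-\<alpha>)))"
proof -
  define L where "L = z powr (-\<alpha>)"
  define x where "x n = \<kappa> n * z" for n
  define Ln where "Ln n = real n * Cconst (u n) * \<gamma> (x n)" for n
  define lo where "lo e n = Ln n * (N (x n * (1 + e)) / N (x n)) * (x n / ((1 + e) * (x n + 1)))" for e n
  define hi where "hi e n = Ln n * (1 + e) * (N (x n * (1 / (1 + e))) / N (x n))" for e n
  have Ln: "Ln \<longlonglongrightarrow> L" using lim unfolding Ln_def x_def L_def .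
  have x: "filterlim x at_top sequentially" unfolding x_def
    using filterlim_tendsto_pos_mult_at_top[OF tendsto_const z \<kappa>] by (simp add: mult.commute)
  have lo_lim: "lo e \<longlonglongrightarrow> L * (1 + e) powr (1 - \<alpha>) * (1 / (1 + e))" if "0 < e" for e
  proof -
    have "(\<lambda>n. x n / (x n + 1) / (1 + e)) \<longlonglongrightarrow> 1 / (1 + e)"
      using tendsto_div_add_1_at_top[OF x] that by (intro tendsto_intros) auto
    then have "(\<lambda>n. x n / ((1 + e) * (x n + 1))) \<longlonglongrightarrow> 1 / (1 + e)"
      by (simp add: field_simps)
    then show ?thesis
      unfolding lo_def[abs_def] using that by (intro tendsto_mult Ln tendsto_normE_ratio[OF x]) simp_all
  qed
  have hi_lim: "hi e \<longlonglongrightarrow> L * (1 + e) * (1 / (1 + e)) powr (1 - \<alpha>)" if "0 < e" for e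
    unfolding hi_def[abs_def] using that
    by (intro tendsto_mult Ln tendsto_const tendsto_normE_ratio[OF x]) simp
  show ?thesis unfolding L_def[symmetric]
  proof (rule tendsto_squeeze_family[where lo="\<lambda>e n. (1 - hi e n / real n)^n"
        and hi="\<lambda>e n. (1 - lo e n / real n)^n"
        and l="\<lambda>e. exp (- (L * (1 + e) * (1 / (1 + e)) powr (1 - \<alpha>)))"
        and h="\<lambda>e. exp (- (L * (1 + e) powr (1 - \<alpha>) * (1 / (1 + e))))"])
    fix e :: real assume e: "0 < e" "e < 1"
    show "(\<lambda>n. (1 - hi e n / real n)^n) \<longlonglongrightarrow> exp (- (L * (1 + e) * (1 / (1 + e)) powr (1 - \<alpha>)))"
      and "(\<lambda>n. (1 - lo e n / real n)^n) \<longlonglongrightarrow> exp (- (L * (1 + e) powr (1 - \<alpha>) * (1 / (1 + e))))"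
      by (rule tendsto_one_minus_div_power, use e hi_lim lo_lim in blast)+
    have "eventually (\<lambda>n. hi e n < L * (1 + e) * (1 / (1 + e)) powr (1 - \<alpha>) + 1) sequentially"
      using order_tendstoD(2)[OF hi_lim[OF e(1)]] by simp
    moreover have "eventually (\<lambda>n. max 1 (1/e) < x n) sequentially"
      using filterlim_at_top_dense[THEN iffD1, OF x] by blast
    moreover have "eventually (\<lambda>n. 0 < \<kappa> n) sequentially"
      using \<kappa> by (simp add: filterlim_at_top_dense)
    ultimately show "eventually (\<lambda>n. (1 - hi e n / real n)^n
        \<le> measure P {\<omega> \<in> space P. max_ratio X Y (u n) n \<omega> / \<kappa> n \<le> z}
      \<and> measure P {\<omega> \<in> space P. max_ratio X Y (u n) n \<omega> / \<kappa> n \<le> z} \<le> (1 - lo e n / real n)^n)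
      sequentially"
      using eventually_ge_at_top[of "nat \<lceil>L * (1 + e) * (1 / (1 + e)) powr (1 - \<alpha>) + 1\<rceil> + 1"]
    proof eventually_elim
      case (elim n)
      then have n: "1 \<le> n" "0 < real n" "hi e n \<le> real n" by linarith+
      have xn: "1 < x n" "1/e \<le> x n" "0 < x n" using elim(2) by auto
      have Nx: "0 < N (x n)" using normE_pos xn by simp
      have lo_n: "lo e n / real n = Cconst (u n) * N (x n * (1 + e)) / ((1 + e) * (x n + 1))"
      proof -
        define D where "D = (1 + e) * (x n + 1)"
        define Ne where "Ne = N (x n * (1 + e))"
        have "0 < D" using xn e by (simp add: D_def)
        then show ?thesis using n xn Nx
          unfolding lo_def Ln_def gam_eq D_def[symmetric] Ne_def[symmetric] by (simp add: field_simps)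
      qed
      have hi_n: "hi e n / real n = Cconst (u n) * (1 + e) * N (x n / (1 + e)) / x n"
        using n xn e Nx unfolding hi_def Ln_def gam_eq by (simp add: field_simps)
      have "hi e n / real n \<le> 1" using n by simp
      from prob_max_ratio_bounds[OF n(1) elim(3) u, of z e, folded x_def, OF xn(1) e(1) xn(2)]
        this[unfolded hi_n]
      show ?case unfolding lo_n hi_n by simp
    qed
  next
    show "((\<lambda>e. exp (- (L * (1 + e) * (1 / (1 + e)) powr (1 - \<alpha>)))) \<longlongrightarrow> exp (- L)) (at_right 0)"
      and "((\<lambda>e. exp (- (L * (1 + e) powr (1 - \<alpha>) * (1 / (1 + e))))) \<longlongrightarrow> exp (- L)) (at_right 0)"
      by (rule tendsto_eq_intros refl | simp)+
  qed
qed

lemma max_ratio_nonpos_tendsto_0: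
  assumes \<kappa>: "filterlim \<kappa> at_top sequentially" and z: "z \<le> 0"
  shows "(\<lambda>n. measure P {\<omega> \<in> space P. max_ratio X Y (u n) n \<omega> / \<kappa> n \<le> z}) \<longlonglongrightarrow> 0"
proof -
  have "eventually (\<lambda>n. 0 < \<kappa> n) sequentially" using \<kappa> by (simp add: filterlim_at_top_dense)
  then have "eventually (\<lambda>n. measure P {\<omega> \<in> space P. max_ratio X Y (u n) n \<omega> / \<kappa> n \<le> z} = 0) sequentially"
    using eventually_ge_at_top[of 1]
  proof eventually_elim
    case (elim n)
    have "{\<omega> \<in> space P. max_ratio X Y (u n) n \<omega> / \<kappa> n \<le> z}
        \<subseteq> {\<omega> \<in> space P. X 1 \<omega> \<le> 0} \<union> {\<omega> \<in> space P. Y 1 \<omega> \<le> 0}"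
    proof (rule subsetI, rule ccontr)
      fix \<omega> assume \<omega>: "\<omega> \<in> {\<omega> \<in> space P. max_ratio X Y (u n) n \<omega> / \<kappa> n \<le> z}"
        and "\<omega> \<notin> {\<omega> \<in> space P. X 1 \<omega> \<le> 0} \<union> {\<omega> \<in> space P. Y 1 \<omega> \<le> 0}"
      then have "0 < max (X 1 \<omega>) (u n) / max (Y 1 \<omega>) (u n)" by auto
      also have "\<dots> \<le> max_ratio X Y (u n) n \<omega>"
        unfolding max_ratio_def using elim(2) by (intro Max_ge) auto
      finally have "0 < max_ratio X Y (u n) n \<omega> / \<kappa> n" using elim(1) by simp
      then show False using \<omega> z by simp
    qed
    then have "measure P {\<omega> \<in> space P. max_ratio X Y (u n) n \<omega> / \<kappa> n \<le> z}
        \<le> measure P {\<omega> \<in> space P. X 1 \<omega> \<le> 0} + measure P {\<omega> \<in> space P. Y 1 \<omega> \<le> 0}"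
      by (intro order_trans[OF P.finite_measure_mono measure_subadditive]) (auto simp: P.emeasure_eq_measure)
    then show ?case
      using spectral_pair.prob_X0_nonpos[OF spectral_pair_sample] spectral_pair.prob_Y0_nonpos[OF spectral_pair_sample]
      by (simp add: order_antisym)
  qed
  then show ?thesis by (simp add: tendsto_eventually)
qed

lemma max_ratio_tendsto_frechet_cdf:
  assumes u: "\<And>n. 0 \<le> u n" and c: "filterlim c at_top sequentially"
    and \<kappa>: "\<kappa> \<sim>[sequentially] (\<lambda>n. gen_inv U (c n))"
    and level: "((\<lambda>n. real n * Cconst (u n) / c n) \<longlongrightarrow> 1) sequentially"
  shows "(\<lambda>n. measure P {\<omega> \<in> space P. max_ratio X Y (u n) n \<omega> / \<kappa> n \<le> z}) \<longlonglongrightarrow> frechet_cdf \<alpha> z"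
proof -
  have \<kappa>_top: "filterlim \<kappa> at_top sequentially"
    by (rule filterlim_at_top_asymp_equiv[OF \<kappa> filterlim_gen_inv_U_at_top[OF c]])
  show ?thesis
  proof (cases "0 < z")
    case True
    have "(\<lambda>n. (real n * Cconst (u n) / c n) * (c n * \<gamma> (\<kappa> n * z))) \<longlonglongrightarrow> 1 * z powr (-\<alpha>)"
      by (intro tendsto_mult level tendsto_mult_gam_asymp_gen_inv[OF c \<kappa> True])
    moreover have "eventually (\<lambda>n. (real n * Cconst (u n) / c n) * (c n * \<gamma> (\<kappa> n * z))
        = real n * Cconst (u n) * \<gamma> (\<kappa> n * z)) sequentially"
      using c by (simp add: filterlim_at_top_dense eventually_mono[of "\<lambda>n. 0 < c n"])
    ultimately have "(\<lambda>n. real n * Cconst (u n) * \<gamma> (\<kappa> n * z)) \<longlonglongrightarrow> z powr (-\<alpha>)"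
      by (simp add: tendsto_cong)
    from max_ratio_tendsto_frechet[OF u \<kappa>_top True this] show ?thesis
      using True by (simp add: frechet_cdf_def)
  next
    case False
    then show ?thesis
      using max_ratio_nonpos_tendsto_0[OF \<kappa>_top] by (simp add: frechet_cdf_def)
  qed
qed

lemma max_ratio_fixed_level_tendsto_frechet_cdf:
  assumes u: "0 \<le> u" and \<kappa>: "\<kappa> \<sim>[sequentially] (\<lambda>n. gen_inv U (Cconst u * real n))"
  shows "(\<lambda>n. measure P {\<omega> \<in> space P. max_ratio X Y u n \<omega> / \<kappa> n \<le> z}) \<longlonglongrightarrow> frechet_cdf \<alpha> z"
proof (rule max_ratio_tendsto_frechet_cdf[where u="\<lambda>_. u" and c="\<lambda>n. Cconst u * real n"])
  show "filterlim (\<lambda>n. Cconst u * real n) at_top sequentially"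
    using Cconst_pos[OF u] by (intro filterlim_tendsto_pos_mult_at_top[OF tendsto_const _ filterlim_real_sequentially])
  show "((\<lambda>n. real n * Cconst u / (Cconst u * real n)) \<longlongrightarrow> 1) sequentially"
    using Cconst_pos[OF u] eventually_gt_at_top[of 0]
    by (intro tendsto_eventually) (auto elim: eventually_mono)
qed (use u \<kappa> in simp_all)

lemma max_ratio_growing_level_tendsto_frechet_cdf:
  assumes pos: "\<forall>n. 0 < u n" and u: "filterlim u at_top sequentially" and o: "u \<in> o(\<lambda>n. real n)"
    and \<kappa>: "\<kappa> \<sim>[sequentially] (\<lambda>n. gen_inv U (real n / u n))"
  shows "(\<lambda>n. measure P {\<omega> \<in> space P. max_ratio X Y (u n) n \<omega> / \<kappa> n \<le> z}) \<longlonglongrightarrow> frechet_cdf \<alpha> z"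
proof (rule max_ratio_tendsto_frechet_cdf[OF _ filterlim_div_at_top_smallo[OF pos o] \<kappa>])
  show "0 \<le> u n" for n using pos by (simp add: less_imp_le)
  show "((\<lambda>n. real n * Cconst (u n) / (real n / u n)) \<longlongrightarrow> 1) sequentially"
  proof (rule Lim_transform_eventually[OF tendsto_mult_Cconst_at_top[OF u]])
    show "eventually (\<lambda>n. u n * Cconst (u n) = real n * Cconst (u n) / (real n / u n)) sequentially"
      using eventually_gt_at_top[of 0]
      by eventually_elim (use pos in \<open>simp add: field_simps less_imp_neq[symmetric]\<close>)
  qed
qed

end

theorem corollary2:
  fixes M :: "'s measure" and f g :: "'s \<Rightarrow> real"
    and P :: "'w measure" and X Y :: "nat \<Rightarrow> 'w \<Rightarrow> real" and \<alpha> :: real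
  assumes "sigma_finite_measure M"
    and "f \<in> borel_measurable M" and "g \<in> borel_measurable M"
    and "\<forall>s\<in>space M. 0 \<le> f s" and "\<forall>s\<in>space M. 0 \<le> g s"
    and "integrable M f" and "integrable M g"
    and "integral\<^sup>L M f = 1" and "integral\<^sup>L M g = 1"
    and "prob_space P"
    and "\<forall>i. X i \<in> borel_measurable P \<and> Y i \<in> borel_measurable P"
    and "prob_space.indep_vars P (\<lambda>_. borel) (\<lambda>i \<omega>. (X i \<omega>, Y i \<omega>)) UNIV"
    and "\<forall>i x y. 0 < x \<longrightarrow> 0 < y \<longrightarrow>
           measure P {\<omega> \<in> space P. X i \<omega> \<le> x \<and> Y i \<omega> \<le> y}
             = exp (- integral\<^sup>L M (\<lambda>s. max (f s / x) (g s / y)))"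
    and "\<forall>t>0. 0 < emeasure M (Eset M f g t)"
    and "regularly_varying (- \<alpha>) (gam M f g)"
  shows "(\<alpha> = 1 \<longleftrightarrow> slowly_varying (normE M f g))
    \<and> (\<forall>u \<kappa>. 0 \<le> u \<longrightarrow>
          \<kappa> \<sim>[sequentially] (\<lambda>n. gen_inv (\<lambda>t. 1 / gam M f g t) (Cconst u * real n)) \<longrightarrow>
          (\<forall>z. (\<lambda>n. measure P {\<omega> \<in> space P. max_ratio X Y u n \<omega> / \<kappa> n \<le> z})
                 \<longlonglongrightarrow> frechet_cdf \<alpha> z))
    \<and> (\<forall>un \<kappa>. (\<forall>n. 0 < un n) \<longrightarrow> filterlim un at_top sequentially \<longrightarrow>
          un \<in> o(\<lambda>n. real n) \<longrightarrow>
          \<kappa> \<sim>[sequentially] (\<lambda>n. gen_inv (\<lambda>t. 1 / gam M f g t) (real n / un n)) \<longrightarrow>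
          (\<forall>z. (\<lambda>n. measure P {\<omega> \<in> space P. max_ratio X Y (un n) n \<omega> / \<kappa> n \<le> z})
                 \<longlonglongrightarrow> frechet_cdf \<alpha> z))"
proof -
  interpret spectral_sample M f g \<alpha> P X Y
    using assms by (simp add: spectral_sample_def spectral_sample_axioms_def spectral_regvar_def
        spectral_regvar_axioms_def spectral_def)
  have "gen_inv (\<lambda>t. 1 / gam M f g t) = gen_inv U"
    by (simp add: U_def[abs_def])
  then show ?thesis
    using alpha_eq_1_iff_slowly_varying max_ratio_fixed_level_tendsto_frechet_cdf
      max_ratio_growing_level_tendsto_frechet_cdf
    by (intro conjI allI impI) simp_all
qed

end
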